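(* Let $X$ be a compact metric space, $T:X\to X$ a surjective local homeomorphism, $d\in\mathbb{N}$, $E\subseteq\mathbb{Z}$ finite and $\varepsilon>0$, and let $\varphi:X\to P_d(\mathbb{Z})$ be a continuous $(E,\varepsilon)$-equivariant map. Then there exist a finite set $S\subseteq\mathbb{Z}$ and a continuous $(E,\varepsilon)$-equivariant map $\varphi':X\to P_d(\mathbb{Z})$ with $\varphi'(X)\subseteq P(S)\cap P_d(\mathbb{Z})$.
   Context: $P_d(\mathbb{Z})$: probability measures on $\mathbb{Z}$ supported on at most $d+1$ points, metric $\rho(\mu,\nu)=\sum_m|\mu(m)-\nu(m)|$, action $\alpha_n(\mu)(m)=\mu(m-n)$. $P(S)$: probability measures supported in $S$. For $n\in\mathbb{Z}$, $T^n(\{x\})$ is the image under $T^n$ if $n\ge0$ and the preimage under $T^{|n|}$ if $n<0$. $\varphi$ is $(E,\varepsilon)$-equivariant if $\rho(\varphi(y),\alpha_n(\varphi(x)))<\varepsilon$ for all $n\in E$, $x\in X$, $y\in T^n(\{x\})$. *)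

theory Defs
  imports "HOL-Analysis.Analysis"
begin

definition prob_int :: "(int \<Rightarrow> real) \<Rightarrow> bool" where
  "prob_int \<mu> \<longleftrightarrow> (\<forall>m. \<mu> m \<ge> 0) \<and> finite {m. \<mu> m \<noteq> 0} \<and> (\<Sum>m\<in>{m. \<mu> m \<noteq> 0}. \<mu> m) = 1"

definition Pd :: "nat \<Rightarrow> (int \<Rightarrow> real) set" where
  "Pd d = {\<mu>. prob_int \<mu> \<and> card {m. \<mu> m \<noteq> 0} \<le> d + 1}"

definition PS :: "int set \<Rightarrow> (int \<Rightarrow> real) set" where
  "PS S = {\<mu>. prob_int \<mu> \<and> {m. \<mu> m \<noteq> 0} \<subseteq> S}"

definition rho :: "(int \<Rightarrow> real) \<Rightarrow> (int \<Rightarrow> real) \<Rightarrow> real" where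
  "rho \<mu> \<nu> = (\<Sum>m\<in>{m. \<mu> m \<noteq> 0} \<union> {m. \<nu> m \<noteq> 0}. \<bar>\<mu> m - \<nu> m\<bar>)"

definition alpha :: "int \<Rightarrow> (int \<Rightarrow> real) \<Rightarrow> (int \<Rightarrow> real)" where
  "alpha n \<mu> = (\<lambda>m. \<mu> (m - n))"

text \<open>T^n({x}): image under T^n for n >= 0, preimage under T^|n| for n < 0.\<close>
definition orbit_set :: "('a \<Rightarrow> 'a) \<Rightarrow> int \<Rightarrow> 'a \<Rightarrow> 'a set" where
  "orbit_set T n x = (if n \<ge> 0 then {(T ^^ nat n) x} else {y. (T ^^ nat (- n)) y = x})"

definition equivariant_approx ::
  "('a \<Rightarrow> 'a) \<Rightarrow> int set \<Rightarrow> real \<Rightarrow> ('a \<Rightarrow> int \<Rightarrow> real) \<Rightarrow> bool" where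
  "equivariant_approx T E \<epsilon> \<phi> \<longleftrightarrow>
     (\<forall>n\<in>E. \<forall>x. \<forall>y\<in>orbit_set T n x. rho (\<phi> y) (alpha n (\<phi> x)) < \<epsilon>)"

definition rho_continuous :: "('a::metric_space \<Rightarrow> int \<Rightarrow> real) \<Rightarrow> bool" where
  "rho_continuous \<phi> \<longleftrightarrow>
     (\<forall>x. \<forall>e>0. \<exists>\<delta>>0. \<forall>y. dist y x < \<delta> \<longrightarrow> rho (\<phi> y) (\<phi> x) < e)"

definition local_homeo :: "('a::topological_space \<Rightarrow> 'a) \<Rightarrow> bool" where
  "local_homeo T \<longleftrightarrow>
     (\<forall>x. \<exists>U. open U \<and> x \<in> U \<and> open (T ` U) \<and> homeomorphism U (T ` U) T (inv_into U T))"

end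

theory Submission
  imports Defs
begin

text \<open>The continuous defect \<open>\<rho>(\<phi> y, \<alpha>\<^sub>n(\<phi> x))\<close> attains its maximum on the compact graph of
  \<open>T\<^sup>n\<close>, so the strict bound \<open>\<epsilon>\<close> holds with a uniform slack. By compactness, a single finite
  set \<open>S\<close> carries all but an arbitrarily small part of the mass of every \<open>\<phi> x\<close>. Conditioning
  each \<open>\<phi> x\<close> on \<open>S\<close> moves it by at most twice the missing mass, which fits inside the slack,
  and is 4-Lipschitz for \<open>\<rho>\<close> as long as \<open>S\<close> carries more than half of the mass, so continuity
  survives.\<close>

abbreviation supp :: "(int \<Rightarrow> real) \<Rightarrow> int set" where
  "supp \<mu> \<equiv> {m. \<mu> m \<noteq> 0}"

lemma rho_eq_sum_superset:
  assumes "finite A" "supp \<mu> \<subseteq> A" "supp \<nu> \<subseteq> A"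
  shows "rho \<mu> \<nu> = (\<Sum>m\<in>A. \<bar>\<mu> m - \<nu> m\<bar>)"
  unfolding rho_def by (rule sum.mono_neutral_left) (use assms in \<open>auto intro: finite_subset\<close>)

lemma rho_nonneg: "rho \<mu> \<nu> \<ge> 0"
  unfolding rho_def by (simp add: sum_nonneg)

lemma rho_commute: "rho \<mu> \<nu> = rho \<nu> \<mu>"
  unfolding rho_def by (simp add: Un_commute abs_minus_commute)

lemma rho_triangle:
  assumes "finite (supp \<mu>)" "finite (supp \<nu>)" "finite (supp \<kappa>)"
  shows "rho \<mu> \<kappa> \<le> rho \<mu> \<nu> + rho \<nu> \<kappa>"
proof -
  let ?A = "supp \<mu> \<union> supp \<nu> \<union> supp \<kappa>"
  have A: "finite ?A" using assms by auto
  have "rho \<mu> \<kappa> = (\<Sum>m\<in>?A. \<bar>\<mu> m - \<kappa> m\<bar>)" by (rule rho_eq_sum_superset[OF A]) auto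
  also have "\<dots> \<le> (\<Sum>m\<in>?A. \<bar>\<mu> m - \<nu> m\<bar> + \<bar>\<nu> m - \<kappa> m\<bar>)"
    by (rule sum_mono) arith
  also have "\<dots> = rho \<mu> \<nu> + rho \<nu> \<kappa>"
    by (simp add: sum.distrib) (subst (1 2) rho_eq_sum_superset[OF A]; auto)
  finally show ?thesis .
qed

lemma supp_alpha: "supp (alpha n \<mu>) = (\<lambda>m. m + n) ` supp \<mu>"
  unfolding alpha_def by (auto simp: image_iff) (metis diff_add_cancel)

lemma rho_alpha:
  assumes "finite (supp \<mu>)" "finite (supp \<nu>)"
  shows "rho (alpha n \<mu>) (alpha n \<nu>) = rho \<mu> \<nu>"
proof -
  let ?A = "supp \<mu> \<union> supp \<nu>"
  have "rho (alpha n \<mu>) (alpha n \<nu>) = (\<Sum>m\<in>(\<lambda>m. m + n) ` ?A. \<bar>alpha n \<mu> m - alpha n \<nu> m\<bar>)"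
    by (rule rho_eq_sum_superset) (use assms in \<open>auto simp: supp_alpha\<close>)
  also have "\<dots> = (\<Sum>m\<in>?A. \<bar>\<mu> m - \<nu> m\<bar>)"
    by (subst sum.reindex) (auto simp: inj_on_def alpha_def)
  finally show ?thesis unfolding rho_def .
qed

lemma rho_alpha_perturb:
  assumes "finite (supp \<mu>)" "finite (supp \<mu>')" "finite (supp \<nu>)" "finite (supp \<nu>')"
  shows "rho \<nu>' (alpha n \<mu>') \<le> rho \<nu>' \<nu> + rho \<nu> (alpha n \<mu>) + rho \<mu>' \<mu>"
proof -
  have fin_alpha: "finite (supp (alpha n \<kappa>))" if "finite (supp \<kappa>)" for \<kappa>
    using that by (simp add: supp_alpha)
  have "rho \<nu>' (alpha n \<mu>') \<le> rho \<nu>' \<nu> + rho \<nu> (alpha n \<mu>')"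
    by (rule rho_triangle) (use assms fin_alpha in auto)
  moreover have "rho \<nu> (alpha n \<mu>') \<le> rho \<nu> (alpha n \<mu>) + rho (alpha n \<mu>) (alpha n \<mu>')"
    by (rule rho_triangle) (use assms fin_alpha in auto)
  moreover have "rho (alpha n \<mu>) (alpha n \<mu>') = rho \<mu>' \<mu>"
    using rho_alpha[OF assms(1,2)] rho_commute by metis
  ultimately show ?thesis by linarith
qed

lemma local_homeo_continuous:
  fixes T :: "'a::t2_space \<Rightarrow> 'a"
  assumes "local_homeo T"
  shows "continuous_on UNIV T"
proof -
  have "isCont T x" for x
  proof -
    obtain U where "open U" "x \<in> U" "homeomorphism U (T ` U) T (inv_into U T)"
      using assms unfolding local_homeo_def by blast
    then show ?thesis using continuous_on_eq_continuous_at unfolding homeomorphism_def by blast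
  qed
  then show ?thesis by (simp add: continuous_at_imp_continuous_on)
qed

lemma continuous_on_funpow:
  fixes f :: "'a::topological_space \<Rightarrow> 'a"
  assumes "continuous_on UNIV f"
  shows "continuous_on UNIV (f ^^ k)"
proof (induction k)
  case (Suc k)
  have "continuous_on UNIV (\<lambda>x. f ((f ^^ k) x))"
    by (rule continuous_on_compose2[OF assms Suc]) simp
  then show ?case by (simp add: comp_def)
qed (simp add: continuous_on_id)

lemma closed_orbit_graph:
  fixes T :: "'a::t2_space \<Rightarrow> 'a"
  assumes "continuous_on UNIV T"
  shows "closed {p. snd p \<in> orbit_set T n (fst p)}"
proof (cases "n \<ge> 0")
  case True
  then have "{p. snd p \<in> orbit_set T n (fst p)} = {p. snd p = (T ^^ nat n) (fst p)}"
    by (auto simp: orbit_set_def)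
  then show ?thesis
    by (simp only:) (intro closed_Collect_eq continuous_on_compose2[OF continuous_on_funpow[OF assms]]
        continuous_intros; simp)
next
  case False
  then have "{p. snd p \<in> orbit_set T n (fst p)} = {p. (T ^^ nat (-n)) (snd p) = fst p}"
    by (auto simp: orbit_set_def)
  then show ?thesis
    by (simp only:) (intro closed_Collect_eq continuous_on_compose2[OF continuous_on_funpow[OF assms]]
        continuous_intros; simp)
qed

lemma continuous_on_rho_alpha:
  fixes \<phi> :: "'a::metric_space \<Rightarrow> int \<Rightarrow> real"
  assumes "rho_continuous \<phi>" "\<And>x. finite (supp (\<phi> x))"
  shows "continuous_on UNIV (\<lambda>p. rho (\<phi> (snd p)) (alpha n (\<phi> (fst p))))"
  unfolding continuous_on_iff
proof (intro ballI allI impI)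
  fix p :: "'a \<times> 'a" and e :: real
  assume "e > 0"
  let ?h = "\<lambda>p. rho (\<phi> (snd p)) (alpha n (\<phi> (fst p)))"
  obtain d1 where "d1 > 0" and d1: "\<forall>y. dist y (snd p) < d1 \<longrightarrow> rho (\<phi> y) (\<phi> (snd p)) < e/2"
    using assms(1) \<open>e > 0\<close> unfolding rho_continuous_def by (meson half_gt_zero)
  obtain d2 where "d2 > 0" and d2: "\<forall>y. dist y (fst p) < d2 \<longrightarrow> rho (\<phi> y) (\<phi> (fst p)) < e/2"
    using assms(1) \<open>e > 0\<close> unfolding rho_continuous_def by (meson half_gt_zero)
  have "dist (?h p') (?h p) < e" if "dist p' p < min d1 d2" for p'
  proof -
    have snd_close: "rho (\<phi> (snd p')) (\<phi> (snd p)) < e/2"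
      and fst_close: "rho (\<phi> (fst p')) (\<phi> (fst p)) < e/2"
      using that d1 d2 dist_fst_le[of p' p] dist_snd_le[of p' p] by auto
    have "?h p' \<le> rho (\<phi> (snd p')) (\<phi> (snd p)) + ?h p + rho (\<phi> (fst p')) (\<phi> (fst p))"
      by (rule rho_alpha_perturb) (use assms(2) in auto)
    moreover have "?h p \<le> rho (\<phi> (snd p)) (\<phi> (snd p')) + ?h p' + rho (\<phi> (fst p)) (\<phi> (fst p'))"
      by (rule rho_alpha_perturb) (use assms(2) in auto)
    ultimately show ?thesis
      using snd_close fst_close rho_commute[of "\<phi> (snd p)"] rho_commute[of "\<phi> (fst p)"]
      by (simp add: dist_real_def abs_less_iff)
  qed
  then show "\<exists>\<delta>>0. \<forall>p'\<in>UNIV. dist p' p < \<delta> \<longrightarrow> dist (?h p') (?h p) < e"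
    using \<open>d1 > 0\<close> \<open>d2 > 0\<close> by (intro exI[of _ "min d1 d2"]) auto
qed

lemma equivariant_approx_slack:
  fixes T :: "'a::metric_space \<Rightarrow> 'a"
  assumes "compact (UNIV :: 'a set)" "continuous_on UNIV T" "finite E"
    and "rho_continuous \<phi>" "\<And>x. finite (supp (\<phi> x))"
    and "equivariant_approx T E \<epsilon> \<phi>"
  shows "\<exists>c<\<epsilon>. \<forall>n\<in>E. \<forall>x. \<forall>y\<in>orbit_set T n x. rho (\<phi> y) (alpha n (\<phi> x)) \<le> c"
proof -
  have "\<exists>c<\<epsilon>. \<forall>x. \<forall>y\<in>orbit_set T n x. rho (\<phi> y) (alpha n (\<phi> x)) \<le> c" if "n \<in> E" for n
  proof -
    define G where "G = {p. snd p \<in> orbit_set T n (fst p)}"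
    define h where "h p = rho (\<phi> (snd p)) (alpha n (\<phi> (fst p)))" for p
    have "compact G"
      using compact_Int_closed[OF compact_Times[OF assms(1,1)] closed_orbit_graph[OF assms(2)]]
      by (simp add: G_def)
    moreover have "continuous_on G h"
      unfolding h_def by (rule continuous_on_subset[OF continuous_on_rho_alpha[OF assms(4,5)]]) simp
    ultimately have compact_h: "compact (h ` G)" by (rule compact_continuous_image[rotated])
    show ?thesis
    proof (cases "G = {}")
      case True
      then show ?thesis by (auto simp: G_def intro!: exI[of _ "\<epsilon> - 1"])
    next
      case False
      then obtain p0 where "p0 \<in> G" "\<forall>p\<in>G. h p \<le> h p0"
        using compact_attains_sup[OF compact_h] by blast
      moreover have "h p0 < \<epsilon>"
        using assms(6) \<open>n \<in> E\<close> \<open>p0 \<in> G\<close> unfolding equivariant_approx_def G_def h_def by auto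
      ultimately show ?thesis by (intro exI[of _ "h p0"]) (auto simp: G_def h_def)
    qed
  qed
  then obtain c where c: "\<And>n. n \<in> E \<Longrightarrow> c n < \<epsilon> \<and>
      (\<forall>x. \<forall>y\<in>orbit_set T n x. rho (\<phi> y) (alpha n (\<phi> x)) \<le> c n)"
    by metis
  define c_max where "c_max = Max (insert (\<epsilon> - 1) (c ` E))"
  have "c_max < \<epsilon>"
    using c assms(3) by (simp add: c_max_def Max_less_iff)
  moreover have "c n \<le> c_max" if "n \<in> E" for n
    using that assms(3) unfolding c_max_def by (intro Max_ge) auto
  ultimately show ?thesis
    using c by (meson order_trans)
qed

lemma uniformly_tight:
  fixes \<phi> :: "'a::metric_space \<Rightarrow> int \<Rightarrow> real"
  assumes "compact (UNIV :: 'a set)" "rho_continuous \<phi>"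
    and "\<And>x. finite (supp (\<phi> x))" "\<And>x k. \<phi> x k \<ge> 0" "\<delta> > 0"
  shows "\<exists>S. finite S \<and> (\<forall>y. (\<Sum>k\<in>supp (\<phi> y) - S. \<phi> y k) < \<delta>)"
proof -
  have "\<forall>x. \<exists>r>0. \<forall>y. dist y x < r \<longrightarrow> rho (\<phi> y) (\<phi> x) < \<delta>"
    using assms(2,5) unfolding rho_continuous_def by blast
  then obtain r where r_pos: "\<And>x. r x > 0"
    and r: "\<And>x y. dist y x < r x \<Longrightarrow> rho (\<phi> y) (\<phi> x) < \<delta>"
    by metis
  obtain C where "finite C" and C: "UNIV \<subseteq> (\<Union>x\<in>C. ball x (r x))"
  proof (rule compactE_image[OF assms(1), of UNIV "\<lambda>x. ball x (r x)"])
    show "UNIV \<subseteq> (\<Union>x\<in>UNIV. ball x (r x))" using r_pos by auto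
  qed auto
  define S where "S = (\<Union>x\<in>C. supp (\<phi> x))"
  have "(\<Sum>k\<in>supp (\<phi> y) - S. \<phi> y k) < \<delta>" for y
  proof -
    obtain x where "x \<in> C" "dist x y < r x"
      using subsetD[OF C UNIV_I[of y]] by auto
    then have "supp (\<phi> x) \<subseteq> S" by (auto simp: S_def)
    then have "(\<Sum>k\<in>supp (\<phi> y) - S. \<phi> y k) \<le> (\<Sum>k\<in>supp (\<phi> y) - supp (\<phi> x). \<phi> y k)"
      using assms(3,4) by (intro sum_mono2) auto
    also have "\<dots> = (\<Sum>k\<in>supp (\<phi> y) - supp (\<phi> x). \<bar>\<phi> y k - \<phi> x k\<bar>)"
      using assms(4) by (intro sum.cong) auto
    also have "\<dots> \<le> rho (\<phi> y) (\<phi> x)"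
      unfolding rho_def using assms(3) by (intro sum_mono2) auto
    also have "\<dots> < \<delta>" using r[of y x] \<open>dist x y < r x\<close> by (simp add: dist_commute)
    finally show ?thesis .
  qed
  moreover have "finite S" using \<open>finite C\<close> assms(3) by (simp add: S_def)
  ultimately show ?thesis by blast
qed

lemma rho_continuous_lipschitz_comp:
  assumes "rho_continuous \<phi>" "L > 0" "\<And>x y. rho (\<psi> y) (\<psi> x) \<le> L * rho (\<phi> y) (\<phi> x)"
  shows "rho_continuous \<psi>"
  unfolding rho_continuous_def
proof (intro allI impI)
  fix x and e :: real
  assume "e > 0"
  then obtain \<delta> where "\<delta> > 0" and \<delta>: "\<forall>y. dist y x < \<delta> \<longrightarrow> rho (\<phi> y) (\<phi> x) < e / L"
    using assms(1,2) unfolding rho_continuous_def by (meson divide_pos_pos)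
  have "rho (\<psi> y) (\<psi> x) < e" if "dist y x < \<delta>" for y
  proof -
    have "rho (\<psi> y) (\<psi> x) \<le> L * rho (\<phi> y) (\<phi> x)" by (rule assms(3))
    also have "\<dots> < L * (e / L)" using \<delta> that assms(2) by (simp only: mult_less_cancel_left_pos)
    finally show ?thesis using assms(2) by simp
  qed
  then show "\<exists>\<delta>>0. \<forall>y. dist y x < \<delta> \<longrightarrow> rho (\<psi> y) (\<psi> x) < e"
    using \<open>\<delta> > 0\<close> by blast
qed

definition conditional :: "int set \<Rightarrow> (int \<Rightarrow> real) \<Rightarrow> int \<Rightarrow> real" where
  "conditional S \<mu> k = (if k \<in> S then \<mu> k / sum \<mu> S else 0)"

lemma supp_conditional: "sum \<mu> S \<noteq> 0 \<Longrightarrow> supp (conditional S \<mu>) = supp \<mu> \<inter> S"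
  by (auto simp: conditional_def)

lemma sum_eq_sum_supp_inter:
  assumes "finite S"
  shows "sum \<mu> S = (\<Sum>k\<in>supp \<mu> \<inter> S. \<mu> k)"
  by (rule sum.mono_neutral_right) (use assms in auto)

lemma prob_int_sum_eq:
  assumes "prob_int \<mu>" "finite S"
  shows "sum \<mu> S = 1 - (\<Sum>k\<in>supp \<mu> - S. \<mu> k)"
  using assms sum.Int_Diff[of "supp \<mu>" \<mu> S] sum_eq_sum_supp_inter[OF assms(2), of \<mu>]
  by (simp add: prob_int_def)

lemma conditional_in_PS_Pd:
  assumes "\<mu> \<in> Pd d" "sum \<mu> S > 0"
  shows "conditional S \<mu> \<in> PS S \<inter> Pd d"
proof -
  have "finite S" using assms(2) by (metis less_irrefl sum.infinite)
  have nonneg: "\<forall>m. \<mu> m \<ge> 0" and fin: "finite (supp \<mu>)" and card: "card (supp \<mu>) \<le> d + 1"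
    using assms(1) by (auto simp: Pd_def prob_int_def)
  have supp: "supp (conditional S \<mu>) = supp \<mu> \<inter> S"
    using assms(2) by (simp add: supp_conditional)
  have "(\<Sum>m\<in>supp \<mu> \<inter> S. conditional S \<mu> m) = (\<Sum>m\<in>supp \<mu> \<inter> S. \<mu> m) / sum \<mu> S"
    by (simp add: conditional_def sum_divide_distrib)
  also have "\<dots> = 1"
    using assms(2) \<open>finite S\<close> by (simp add: sum_eq_sum_supp_inter[symmetric])
  finally have "(\<Sum>m\<in>supp (conditional S \<mu>). conditional S \<mu> m) = 1" by (simp add: supp)
  moreover have "card (supp (conditional S \<mu>)) \<le> d + 1"
    using card_mono[OF fin, of "supp \<mu> \<inter> S"] card by (simp add: supp)
  moreover have "\<forall>m. conditional S \<mu> m \<ge> 0"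
    using nonneg assms(2) by (simp add: conditional_def)
  ultimately show ?thesis
    using fin by (auto simp: PS_def Pd_def prob_int_def supp)
qed

lemma rho_conditional:
  assumes "prob_int \<mu>" "sum \<mu> S > 0"
  shows "rho (conditional S \<mu>) \<mu> = 2 * (1 - sum \<mu> S)"
proof -
  have "finite S" using assms(2) by (metis less_irrefl sum.infinite)
  have nonneg: "\<And>m. \<mu> m \<ge> 0" and fin: "finite (supp \<mu>)"
    using assms(1) by (auto simp: prob_int_def)
  have "sum \<mu> S \<le> 1"
    using prob_int_sum_eq[OF assms(1) \<open>finite S\<close>] by (simp add: nonneg sum_nonneg)
  have "rho (conditional S \<mu>) \<mu> = (\<Sum>k\<in>supp \<mu>. \<bar>conditional S \<mu> k - \<mu> k\<bar>)"
    by (rule rho_eq_sum_superset) (use fin assms(2) in \<open>auto simp: supp_conditional\<close>)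
  also have "\<dots> = (\<Sum>k\<in>supp \<mu> \<inter> S. \<mu> k * (1 / sum \<mu> S - 1)) + (\<Sum>k\<in>supp \<mu> - S. \<mu> k)"
  proof -
    have "\<bar>conditional S \<mu> k - \<mu> k\<bar> = \<mu> k * (1 / sum \<mu> S - 1)" if "k \<in> S" for k
    proof -
      have "1 / sum \<mu> S - 1 \<ge> 0" using assms(2) \<open>sum \<mu> S \<le> 1\<close> by (simp add: field_simps)
      moreover have "conditional S \<mu> k - \<mu> k = \<mu> k * (1 / sum \<mu> S - 1)"
        using that by (simp add: conditional_def right_diff_distrib)
      ultimately show ?thesis using nonneg[of k] by simp
    qed
    then show ?thesis
      by (simp add: sum.Int_Diff[OF fin, of _ S] conditional_def nonneg)
  qed
  also have "\<dots> = sum \<mu> S * (1 / sum \<mu> S - 1) + (1 - sum \<mu> S)"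
    using prob_int_sum_eq[OF assms(1) \<open>finite S\<close>]
    by (simp add: sum_distrib_right[symmetric] sum_eq_sum_supp_inter[OF \<open>finite S\<close>, symmetric])
  also have "\<dots> = 2 * (1 - sum \<mu> S)"
    using assms(2) by (simp add: field_simps)
  finally show ?thesis .
qed

lemma abs_divide_diff_le:
  fixes a b p q :: real
  assumes "p > 0" "q > 0" "b \<ge> 0"
  shows "\<bar>a / p - b / q\<bar> \<le> \<bar>a - b\<bar> / p + b * \<bar>q - p\<bar> / (p * q)"
proof -
  have "a / p - b / q = (a - b) / p + b * (q - p) / (p * q)"
    using assms by (simp add: field_simps)
  then show ?thesis
    using assms abs_triangle_ineq[of "(a - b) / p" "b * (q - p) / (p * q)"] by (simp add: abs_mult)
qed

lemma rho_conditional_le: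
  assumes "\<And>m. \<mu> m \<ge> 0" "finite (supp \<mu>)" "finite (supp \<nu>)"
    and "sum \<mu> S > 0" "sum \<nu> S > 0"
  shows "rho (conditional S \<nu>) (conditional S \<mu>) \<le> 2 * rho \<nu> \<mu> / sum \<nu> S"
proof -
  have "finite S" using assms(4) by (metis less_irrefl sum.infinite)
  define D where "D = (\<Sum>k\<in>S. \<bar>\<nu> k - \<mu> k\<bar>)"
  have "rho \<nu> \<mu> = (\<Sum>k\<in>S \<union> supp \<nu> \<union> supp \<mu>. \<bar>\<nu> k - \<mu> k\<bar>)"
    by (rule rho_eq_sum_superset) (use assms(2,3) \<open>finite S\<close> in auto)
  then have "D \<le> rho \<nu> \<mu>"
    unfolding D_def using assms(2,3) \<open>finite S\<close> by (simp only:) (intro sum_mono2; auto)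
  have mass_diff: "\<bar>sum \<mu> S - sum \<nu> S\<bar> \<le> D"
    unfolding D_def using sum_abs[of "\<lambda>k. \<nu> k - \<mu> k" S]
    by (simp add: sum_subtractf abs_minus_commute)
  have "rho (conditional S \<nu>) (conditional S \<mu>) = (\<Sum>k\<in>S. \<bar>\<nu> k / sum \<nu> S - \<mu> k / sum \<mu> S\<bar>)"
    using rho_eq_sum_superset[OF \<open>finite S\<close>, of "conditional S \<nu>" "conditional S \<mu>"] assms(4,5)
    by (simp add: supp_conditional) (simp add: conditional_def)
  also have "\<dots> \<le> (\<Sum>k\<in>S. \<bar>\<nu> k - \<mu> k\<bar> / sum \<nu> S
      + \<mu> k * \<bar>sum \<mu> S - sum \<nu> S\<bar> / (sum \<nu> S * sum \<mu> S))"
    by (rule sum_mono, rule abs_divide_diff_le) (use assms in auto)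
  also have "\<dots> = D / sum \<nu> S + sum \<mu> S * \<bar>sum \<mu> S - sum \<nu> S\<bar> / (sum \<nu> S * sum \<mu> S)"
    by (simp add: D_def sum.distrib sum_divide_distrib[symmetric] sum_distrib_right[symmetric])
  also have "\<dots> = (D + \<bar>sum \<mu> S - sum \<nu> S\<bar>) / sum \<nu> S"
    using assms(4,5) by (simp add: field_simps)
  also have "\<dots> \<le> 2 * rho \<nu> \<mu> / sum \<nu> S"
    using mass_diff \<open>D \<le> rho \<nu> \<mu>\<close> assms(5) by (simp add: divide_right_mono)
  finally show ?thesis .
qed

lemma finitely_supported_approx:
  fixes \<phi> :: "'a::metric_space \<Rightarrow> int \<Rightarrow> real"
  assumes "compact (UNIV :: 'a set)" "\<forall>x. \<phi> x \<in> Pd d" "rho_continuous \<phi>" "\<eta> > 0"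
  shows "\<exists>S \<psi>. finite S \<and> (\<forall>x. \<psi> x \<in> PS S \<inter> Pd d) \<and> rho_continuous \<psi> \<and>
           (\<forall>x. rho (\<psi> x) (\<phi> x) < \<eta>)"
proof -
  have prob: "\<And>x. prob_int (\<phi> x)" and fin: "\<And>x. finite (supp (\<phi> x))"
    and nonneg: "\<And>x k. \<phi> x k \<ge> 0"
    using assms(2) by (auto simp: Pd_def prob_int_def)
  define \<delta> where "\<delta> = min (\<eta> / 2) (1 / 2)"
  have "\<delta> > 0" using \<open>\<eta> > 0\<close> by (simp add: \<delta>_def)
  have "\<delta> \<le> \<eta> / 2" "\<delta> \<le> 1 / 2" unfolding \<delta>_def by (rule min.cobounded1, rule min.cobounded2)
  obtain S where "finite S" and tail: "\<forall>y. (\<Sum>k\<in>supp (\<phi> y) - S. \<phi> y k) < \<delta>"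
    using uniformly_tight[OF assms(1,3) fin nonneg \<open>\<delta> > 0\<close>] by blast
  have mass: "1 - sum (\<phi> x) S < \<delta>" "sum (\<phi> x) S > 1 / 2" for x
    using prob_int_sum_eq[OF prob \<open>finite S\<close>, of x] tail[rule_format, of x] \<open>\<delta> \<le> 1 / 2\<close>
    by linarith+
  have mass_pos: "sum (\<phi> x) S > 0" for x using mass(2)[of x] by linarith
  define \<psi> where "\<psi> x = conditional S (\<phi> x)" for x
  have "rho (\<psi> y) (\<psi> x) \<le> 4 * rho (\<phi> y) (\<phi> x)" for x y
  proof -
    have "rho (\<psi> y) (\<psi> x) \<le> 2 * rho (\<phi> y) (\<phi> x) / sum (\<phi> y) S"
      unfolding \<psi>_def by (intro rho_conditional_le fin nonneg mass_pos)
    also have "\<dots> \<le> 4 * rho (\<phi> y) (\<phi> x)"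
      using mass(2)[of y] mult_right_mono[of 1 "2 * sum (\<phi> y) S", OF _ rho_nonneg[of "\<phi> y" "\<phi> x"]]
      by (simp add: field_simps)
    finally show ?thesis .
  qed
  then have "rho_continuous \<psi>" by (intro rho_continuous_lipschitz_comp[OF assms(3)]) auto
  moreover have "rho (\<psi> x) (\<phi> x) < \<eta>" for x
    using rho_conditional[of "\<phi> x" S] prob[of x] mass[of x] \<open>\<delta> \<le> \<eta> / 2\<close> by (simp add: \<psi>_def)
  moreover have "\<psi> x \<in> PS S \<inter> Pd d" for x
    unfolding \<psi>_def using assms(2) mass_pos by (intro conditional_in_PS_Pd) auto
  ultimately show ?thesis using \<open>finite S\<close> by blast
qed

theorem lemma5p8:
  fixes T :: "'a::metric_space \<Rightarrow> 'a"
    and d :: nat and E :: "int set" and \<epsilon> :: real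
    and \<phi> :: "'a \<Rightarrow> int \<Rightarrow> real"
  assumes "compact (UNIV :: 'a set)"
    and "surj T" and "local_homeo T"
    and "finite E" and "\<epsilon> > 0"
    and "\<forall>x. \<phi> x \<in> Pd d"
    and "rho_continuous \<phi>"
    and "equivariant_approx T E \<epsilon> \<phi>"
  shows "\<exists>S :: int set. \<exists>\<phi>' :: 'a \<Rightarrow> int \<Rightarrow> real.
           finite S \<and> (\<forall>x. \<phi>' x \<in> Pd d) \<and> rho_continuous \<phi>' \<and>
           equivariant_approx T E \<epsilon> \<phi>' \<and> (\<forall>x. \<phi>' x \<in> PS S \<inter> Pd d)"
proof -
  have fin: "\<And>x. finite (supp (\<phi> x))"
    using assms(6) by (auto simp: Pd_def prob_int_def)
  obtain c where "c < \<epsilon>"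
    and c: "\<forall>n\<in>E. \<forall>x. \<forall>y\<in>orbit_set T n x. rho (\<phi> y) (alpha n (\<phi> x)) \<le> c"
    using equivariant_approx_slack[OF assms(1) local_homeo_continuous[OF assms(3)] assms(4,7) fin assms(8)]
    by blast
  obtain S \<psi> where "finite S" and \<psi>: "\<forall>x. \<psi> x \<in> PS S \<inter> Pd d" "rho_continuous \<psi>"
    and \<psi>_close: "\<forall>x. rho (\<psi> x) (\<phi> x) < (\<epsilon> - c) / 2"
    using finitely_supported_approx[OF assms(1,6,7), of "(\<epsilon> - c) / 2"] \<open>c < \<epsilon>\<close> by auto
  have "equivariant_approx T E \<epsilon> \<psi>"
    unfolding equivariant_approx_def
  proof (intro ballI allI)
    fix n x y assume "n \<in> E" "y \<in> orbit_set T n x"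
    have "finite (supp (\<psi> z))" for z using \<psi>(1) by (auto simp: PS_def prob_int_def)
    then have "rho (\<psi> y) (alpha n (\<psi> x)) \<le> rho (\<psi> y) (\<phi> y) + rho (\<phi> y) (alpha n (\<phi> x)) + rho (\<psi> x) (\<phi> x)"
      by (intro rho_alpha_perturb fin)
    moreover have "rho (\<phi> y) (alpha n (\<phi> x)) \<le> c"
      using c \<open>n \<in> E\<close> \<open>y \<in> orbit_set T n x\<close> by blast
    ultimately show "rho (\<psi> y) (alpha n (\<psi> x)) < \<epsilon>"
      using \<psi>_close[rule_format, of x] \<psi>_close[rule_format, of y] by argo
  qed
  then show ?thesis using \<open>finite S\<close> \<psi> by blast
qed

end
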